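(* Let $n\ge 1$ and let $\underline x=(a_1,\ldots,a_m)$ and $\underline y=(b_1,\ldots,b_t)$ be compositions of $n$. Then the meander $M(\underline x\mid\underline y)$ is a single path (i.e. it is connected, has no cycles, and is a path through all $n$ vertices) if and only if the meander permutation $\sigma_{\underline x,\underline y}$ is an $n$-cycle in the symmetric group $S_n$.
   Context: A composition of $n$ is a sequence $(a_1,\ldots,a_m)$ of nonnegative integers with $\sum a_i=n$. The meander $M(\underline x\mid\underline y)$ is the graph on vertices $1,2,\ldots,n$ (placed in order on a horizontal line) with the following edges. Top edges: for each part $a_k$ of $\underline x$, with $s=a_1+\cdots+a_{k-1}$, join $s+j$ to $s+a_k+1-j$ for $1\le j\le\lfloor a_k/2\rfloor$ (drawn as arcs above the line). Bottom edges: the same construction using the parts $b_k$ of $\underline y$ (drawn as arcs below the line). The modified meander $M'(\underline x\mid\underline y)$ is obtained from $M(\underline x\mid\underline y)$ by adding, for each odd $a_k$, a top loop at vertex $a_1+\cdots+a_{k-1}+\lceil a_k/2\rceil$, and for each odd $b_k$, a bottom loop at vertex $b_1+\cdots+b_{k-1}+\lceil b_k/2\rceil$; thus every vertex of $M'$ is incident with exactly one top edge or top loop and exactly one bottom edge or bottom loop. The top bijection $t$ of $\{1,\ldots,n\}$ sends $i$ to the other endpoint of the top edge at $i$, and $t(i)=i$ if $i$ carries a top loop; the bottom bijection $b$ is defined analogously with bottom edges/loops. The meander permutation is $\sigma_{\underline x,\underline y}=t\circ b\in S_n$, i.e. $\sigma_{\underline x,\underline y}(i)=t(b(i))$. *)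

theory Defs
  imports "HOL-Combinatorics.Cycles"
begin

definition is_composition :: "nat \<Rightarrow> nat list \<Rightarrow> bool" where
  "is_composition n xs \<longleftrightarrow> sum_list xs = n"

definition comp_edges :: "nat list \<Rightarrow> nat set set" where
  "comp_edges xs = {{s + j, s + a + 1 - j} | k s a j.
      k < length xs \<and> s = sum_list (take k xs) \<and> a = xs ! k \<and> 1 \<le> j \<and> j \<le> a div 2}"

definition arc_bij :: "nat list \<Rightarrow> nat \<Rightarrow> nat" where
  "arc_bij xs i = (if \<exists>j. j \<noteq> i \<and> {i, j} \<in> comp_edges xs
                   then (THE j. j \<noteq> i \<and> {i, j} \<in> comp_edges xs) else i)"

definition meander_perm :: "nat list \<Rightarrow> nat list \<Rightarrow> nat \<Rightarrow> nat" where
  "meander_perm xs ys = arc_bij xs \<circ> arc_bij ys"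

text \<open>Edges of the meander M(x|y) as a multigraph: top edges tagged True, bottom edges
  tagged False (so a top and a bottom arc between the same vertices are two edges).\<close>
definition meander_edges :: "nat list \<Rightarrow> nat list \<Rightarrow> (bool \<times> nat set) set" where
  "meander_edges xs ys = {(True, e) | e. e \<in> comp_edges xs} \<union> {(False, e) | e. e \<in> comp_edges ys}"

definition meander_is_path :: "nat \<Rightarrow> nat list \<Rightarrow> nat list \<Rightarrow> bool" where
  "meander_is_path n xs ys \<longleftrightarrow>
     (\<exists>vs. distinct vs \<and> set vs = {1..n} \<and>
        card (meander_edges xs ys) = n - 1 \<and>
        (\<forall>(l, e) \<in> meander_edges xs ys. \<exists>i. i + 1 < n \<and> e = {vs ! i, vs ! (i + 1)}) \<and>
        (\<forall>i. i + 1 < n \<longrightarrow> (\<exists>l. (l, {vs ! i, vs ! (i + 1)}) \<in> meander_edges xs ys)))"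

definition is_n_cycle :: "nat \<Rightarrow> (nat \<Rightarrow> nat) \<Rightarrow> bool" where
  "is_n_cycle n \<sigma> \<longleftrightarrow> (\<exists>cs. distinct cs \<and> set cs = {1..n} \<and> \<sigma> = cycle_of_list cs)"

end

theory Submission
  imports Defs
begin

text \<open>
  Let t and b be the involutions of the top and the bottom arcs. If the meander is a path
  v_0, ..., v_(n-1), its edges alternate between the two sides, so t and b act on positions as
  the reflections pairing 2j with 2j + 1 and 2j - 1 with 2j (or the other way round).
  Labelling v_j by the j-th term of 0, 1, -1, 2, -2, ... in \<int>/n turns them into the
  reflections k \<mapsto> 1 - k and k \<mapsto> -k, whose composite is the rotation k \<mapsto> k + 1, an n-cycle.
  Conversely, if t \<circ> b is an n-cycle, labelling that cycle by \<int>/n turns t and b into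
  reflections k \<mapsto> c - k and k \<mapsto> c - 1 - k. A translation makes c = 1 (when c is even,
  after the symmetry k \<mapsto> -k, which exchanges the two sides), and reading the labels along
  the zigzag gives the path.
\<close>

section \<open>Arcs of a composition\<close>

lemma sum_list_take_mono:
  fixes xs :: "nat list"
  assumes "k \<le> k'"
  shows "sum_list (take k xs) \<le> sum_list (take k' xs)"
proof -
  obtain d where "k' = k + d" using assms le_Suc_ex by blast
  then show ?thesis by (simp add: take_add)
qed

lemma part_end_le:
  fixes xs :: "nat list"
  assumes "k < length xs" "k < k'"
  shows "sum_list (take k xs) + xs ! k \<le> sum_list (take k' xs)"
  using sum_list_take_mono[of "Suc k" k' xs] assms by (simp add: take_Suc_conv_app_nth)

lemma part_unique:
  fixes xs :: "nat list"
  assumes "k < length xs" "k' < length xs"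
    and "sum_list (take k xs) < i" "i \<le> sum_list (take k xs) + xs ! k"
    and "sum_list (take k' xs) < i" "i \<le> sum_list (take k' xs) + xs ! k'"
  shows "k = k'"
  using part_end_le[OF assms(1), of k'] part_end_le[OF assms(2), of k] assms(3-6)
  by (cases k k' rule: linorder_cases) auto

lemma comp_edgeE:
  assumes "e \<in> comp_edges xs"
  obtains k p q where "k < length xs" "e = {p, q}" "p \<noteq> q"
    and "sum_list (take k xs) < p" "p \<le> sum_list (take k xs) + xs ! k"
    and "sum_list (take k xs) < q" "q \<le> sum_list (take k xs) + xs ! k"
    and "p + q = 2 * sum_list (take k xs) + xs ! k + 1"
proof -
  obtain k j where k: "k < length xs" and j: "1 \<le> j" "2 * j \<le> xs ! k"
    and e: "e = {sum_list (take k xs) + j, sum_list (take k xs) + xs ! k + 1 - j}"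
    using assms unfolding comp_edges_def by fastforce
  show thesis by (rule that[OF k e]) (use j in linarith)+
qed

lemma comp_edge_subset:
  assumes "e \<in> comp_edges xs"
  shows "e \<subseteq> {1..sum_list xs}"
proof -
  obtain k p q where k: "k < length xs" "e = {p, q}"
    "sum_list (take k xs) < p" "p \<le> sum_list (take k xs) + xs ! k"
    "sum_list (take k xs) < q" "q \<le> sum_list (take k xs) + xs ! k"
    using assms by (rule comp_edgeE)
  moreover have "sum_list (take k xs) + xs ! k \<le> sum_list xs"
    using part_end_le[OF k(1) k(1)] by simp
  ultimately show ?thesis by auto
qed

lemma comp_edge_neq: "{i, j} \<in> comp_edges xs \<Longrightarrow> i \<noteq> j"
  by (elim comp_edgeE) (auto simp: doubleton_eq_iff)

lemma comp_edge_unique: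
  assumes "{i, j} \<in> comp_edges xs" "{i, j'} \<in> comp_edges xs"
  shows "j = j'"
proof -
  obtain k p q where k: "k < length xs" "{i, j} = {p, q}"
    "sum_list (take k xs) < p" "p \<le> sum_list (take k xs) + xs ! k"
    "sum_list (take k xs) < q" "q \<le> sum_list (take k xs) + xs ! k"
    "p + q = 2 * sum_list (take k xs) + xs ! k + 1"
    using assms(1) by (rule comp_edgeE)
  obtain k' p' q' where k': "k' < length xs" "{i, j'} = {p', q'}"
    "sum_list (take k' xs) < p'" "p' \<le> sum_list (take k' xs) + xs ! k'"
    "sum_list (take k' xs) < q'" "q' \<le> sum_list (take k' xs) + xs ! k'"
    "p' + q' = 2 * sum_list (take k' xs) + xs ! k' + 1"
    using assms(2) by (rule comp_edgeE)
  have "i \<in> {p, q}" "i \<in> {p', q'}" using k(2) k'(2) by blast+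
  then have "k = k'" using part_unique[OF k(1) k'(1), of i] k(3-6) k'(3-6) by blast
  moreover have "i + j = p + q" "i + j' = p' + q'"
    using k(2) k'(2) by (auto simp: doubleton_eq_iff)
  ultimately show ?thesis using k(7) k'(7) by simp
qed

lemma arc_bij_eq:
  assumes "{i, j} \<in> comp_edges xs"
  shows "arc_bij xs i = j"
proof -
  have "j \<noteq> i" using comp_edge_neq[OF assms] by simp
  then have "(THE j'. j' \<noteq> i \<and> {i, j'} \<in> comp_edges xs) = j"
    using assms comp_edge_unique by blast
  with \<open>j \<noteq> i\<close> assms show ?thesis unfolding arc_bij_def by auto
qed

lemma arc_bij_edge:
  assumes "arc_bij xs i \<noteq> i"
  shows "{i, arc_bij xs i} \<in> comp_edges xs"
proof -
  from assms obtain j where "{i, j} \<in> comp_edges xs" unfolding arc_bij_def by (auto split: if_splits)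
  then show ?thesis using arc_bij_eq by simp
qed

lemma arc_bij_arc_bij [simp]: "arc_bij xs (arc_bij xs i) = i"
proof (cases "arc_bij xs i = i")
  case False
  then have "{arc_bij xs i, i} \<in> comp_edges xs" using arc_bij_edge by (simp add: insert_commute)
  then show ?thesis by (rule arc_bij_eq)
qed simp

lemma arc_bij_fixed: "i \<notin> {1..sum_list xs} \<Longrightarrow> arc_bij xs i = i"
  using arc_bij_edge comp_edge_subset by blast

lemma comp_edges_eq: "comp_edges xs = {{x, arc_bij xs x} | x. arc_bij xs x \<noteq> x}"
proof (intro equalityI subsetI)
  fix e assume e: "e \<in> comp_edges xs"
  then obtain k p q where "k < length xs" "e = {p, q}" "p \<noteq> q" by (rule comp_edgeE)
  moreover from e this(2) have "arc_bij xs p = q" by (simp add: arc_bij_eq)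
  ultimately show "e \<in> {{x, arc_bij xs x} | x. arc_bij xs x \<noteq> x}" by auto
next
  fix e assume "e \<in> {{x, arc_bij xs x} | x. arc_bij xs x \<noteq> x}"
  then show "e \<in> comp_edges xs" using arc_bij_edge by auto
qed

section \<open>Hamiltonian paths of two arc systems\<close>

definition involution_edges :: "(bool \<Rightarrow> nat \<Rightarrow> nat) \<Rightarrow> (bool \<times> nat set) set" where
  "involution_edges arc = {(b, {x, arc b x}) | b x. arc b x \<noteq> x}"

definition hamiltonian_path :: "nat \<Rightarrow> ('l \<times> nat set) set \<Rightarrow> bool" where
  "hamiltonian_path n E \<longleftrightarrow>
     (\<exists>vs. distinct vs \<and> set vs = {1..n} \<and> card E = n - 1 \<and>
        (\<forall>(l, e) \<in> E. \<exists>i. i + 1 < n \<and> e = {vs ! i, vs ! (i + 1)}) \<and>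
        (\<forall>i. i + 1 < n \<longrightarrow> (\<exists>l. (l, {vs ! i, vs ! (i + 1)}) \<in> E)))"

lemma meander_edges_eq_involution_edges:
  "meander_edges xs ys = involution_edges (\<lambda>b. if b then arc_bij xs else arc_bij ys)"
  unfolding meander_edges_def involution_edges_def comp_edges_eq by auto

lemma inj_on_adjacent_pairs:
  assumes "distinct vs"
  shows "inj_on (\<lambda>i. {vs ! i, vs ! Suc i}) {..<length vs - 1}"
proof (rule inj_onI)
  fix i j
  assume "i \<in> {..<length vs - 1}" "j \<in> {..<length vs - 1}"
    and "{vs ! i, vs ! Suc i} = {vs ! j, vs ! Suc j}"
  then show "i = j" using assms by (auto simp: doubleton_eq_iff nth_eq_iff_index_eq)
qed

lemma hamiltonian_path_iff:
  assumes "finite E"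
  shows "hamiltonian_path n E \<longleftrightarrow>
    (\<exists>vs lt. distinct vs \<and> set vs = {1..n} \<and> E = (\<lambda>i. (lt i, {vs ! i, vs ! Suc i})) ` {..<n - 1})"
    (is "_ \<longleftrightarrow> (\<exists>vs lt. ?path vs lt)")
proof
  assume "hamiltonian_path n E"
  then obtain vs where vs: "distinct vs" "set vs = {1..n}" and card: "card E = n - 1"
    and covered: "\<forall>i. i + 1 < n \<longrightarrow> (\<exists>l. (l, {vs ! i, vs ! Suc i}) \<in> E)"
    unfolding hamiltonian_path_def by auto
  obtain lt where lt: "\<And>i. i + 1 < n \<Longrightarrow> (lt i, {vs ! i, vs ! Suc i}) \<in> E"
    using covered by metis
  define \<phi> where "\<phi> i = (lt i, {vs ! i, vs ! Suc i})" for i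
  have "length vs = n" using distinct_card[OF vs(1)] vs(2) by simp
  then have inj: "inj_on \<phi> {..<n - 1}"
    using inj_on_adjacent_pairs[OF vs(1)] unfolding \<phi>_def inj_on_def by auto
  have "\<phi> ` {..<n - 1} = E"
    by (rule card_subset_eq[OF assms]) (use lt card card_image[OF inj] in \<open>auto simp: \<phi>_def\<close>)
  then show "\<exists>vs lt. ?path vs lt" using vs unfolding \<phi>_def by blast
next
  assume "\<exists>vs lt. ?path vs lt"
  then obtain vs lt where vs: "distinct vs" "set vs = {1..n}"
    and E: "E = (\<lambda>i. (lt i, {vs ! i, vs ! Suc i})) ` {..<n - 1}" by blast
  have "length vs = n" using distinct_card[OF vs(1)] vs(2) by simp
  then have "inj_on (\<lambda>i. (lt i, {vs ! i, vs ! Suc i})) {..<n - 1}"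
    using inj_on_adjacent_pairs[OF vs(1)] unfolding inj_on_def by auto
  then have "card E = n - 1" unfolding E by (simp add: card_image)
  moreover have "\<forall>(l, e) \<in> E. \<exists>i. i + 1 < n \<and> e = {vs ! i, vs ! (i + 1)}"
    unfolding E by (fastforce simp: less_diff_conv)
  moreover have "\<forall>i. i + 1 < n \<longrightarrow> (\<exists>l. (l, {vs ! i, vs ! (i + 1)}) \<in> E)"
    unfolding E by force
  ultimately show "hamiltonian_path n E" unfolding hamiltonian_path_def using vs by blast
qed

section \<open>Positions along a path\<close>

definition adjacent_swap :: "nat \<Rightarrow> bool \<Rightarrow> nat \<Rightarrow> nat" where
  "adjacent_swap n b i =
     (if even i = b \<and> i + 1 < n then i + 1 else if even i \<noteq> b \<and> 0 < i then i - 1 else i)"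

lemma adjacent_swap_less: "i < n \<Longrightarrow> adjacent_swap n b i < n"
  by (auto simp: adjacent_swap_def)

lemma adjacent_swap_adjacent_swap: "i < n \<Longrightarrow> adjacent_swap n b (adjacent_swap n b i) = i"
  by (auto simp: adjacent_swap_def)

lemma adjacent_swap_Suc: "j + 1 < n \<Longrightarrow> adjacent_swap n (even j) j = Suc j"
  by (simp add: adjacent_swap_def)

lemma adjacent_swap_moved:
  assumes "i < n" "adjacent_swap n b i \<noteq> i"
  obtains j where "j + 1 < n" "b = even j" "{i, adjacent_swap n b i} = {j, Suc j}"
proof (cases "even i = b \<and> i + 1 < n")
  case True
  then show thesis by (intro that[of i]) (auto simp: adjacent_swap_def)
next
  case False
  then have "even i \<noteq> b" "0 < i" "adjacent_swap n b i = i - 1"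
    using assms(2) by (auto simp: adjacent_swap_def split: if_splits)
  with assms(1) show thesis by (intro that[of "i - 1"]) auto
qed

definition zigzag :: "nat \<Rightarrow> int" where
  "zigzag j = (if even j then - int (j div 2) else int (j div 2) + 1)"

lemma zigzag_Suc: "zigzag (Suc i) = of_bool (even i) - zigzag i"
  by (cases "even i") (auto simp: zigzag_def elim!: evenE oddE)

lemma zigzag_Suc_minus: "zigzag (Suc i) - zigzag i = (if even i then int (Suc i) else - int (Suc i))"
  by (cases "even i") (auto simp: zigzag_def elim!: evenE oddE)

lemma zigzag_adjacent_swap:
  assumes "i < n"
  shows "zigzag (adjacent_swap n b i) mod int n = (of_bool b - zigzag i) mod int n"
proof (cases "even i = b")
  case True
  show ?thesis
  proof (cases "i + 1 < n")
    case True
    with \<open>even i = b\<close> show ?thesis by (simp add: adjacent_swap_def zigzag_Suc)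
  next
    case False
    with assms have "Suc i = n" by simp
    then have "int n dvd zigzag (Suc i) - zigzag i" unfolding zigzag_Suc_minus by auto
    moreover have "adjacent_swap n b i = i" using \<open>even i = b\<close> False
      by (simp add: adjacent_swap_def)
    moreover have "of_bool b - zigzag i = zigzag (Suc i)" using \<open>even i = b\<close>
      by (simp add: zigzag_Suc)
    ultimately show ?thesis by (metis dvd_diff_commute mod_eq_dvd_iff)
  qed
next
  case False
  then show ?thesis by (cases i) (simp_all add: adjacent_swap_def zigzag_Suc zigzag_def)
qed

lemma zigzag_bounds: "i < n \<Longrightarrow> - int n < 2 * zigzag i \<and> 2 * zigzag i \<le> int n"
  by (auto simp: zigzag_def elim!: evenE oddE)

lemma zigzag_inj: "zigzag i = zigzag j \<Longrightarrow> i = j"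
  by (auto simp: zigzag_def split: if_splits elim!: evenE oddE)

lemma zigzag_mod_inj:
  assumes "i < n" "j < n" "zigzag i mod int n = zigzag j mod int n"
  shows "i = j"
proof (rule zigzag_inj, rule ccontr)
  assume "zigzag i \<noteq> zigzag j"
  moreover have "int n dvd zigzag i - zigzag j" using assms(3) by (simp add: mod_eq_dvd_iff)
  ultimately have "int n \<le> \<bar>zigzag i - zigzag j\<bar>"
    using dvd_imp_le_int[of "zigzag i - zigzag j" "int n"] by simp
  then show False using zigzag_bounds[OF assms(1)] zigzag_bounds[OF assms(2)] by linarith
qed

lemma zigzag_mod_surj:
  assumes "0 < n"
  obtains j where "j < n" "zigzag j mod int n = k mod int n"
proof -
  have inj: "inj_on (\<lambda>j. zigzag j mod int n) {..<n}"
    using zigzag_mod_inj by (auto simp: inj_on_def)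
  have "(\<lambda>j. zigzag j mod int n) ` {..<n} \<subseteq> {0..<int n}" using assms by auto
  moreover have "card ((\<lambda>j. zigzag j mod int n) ` {..<n}) = card {0..<int n}"
    using card_image[OF inj] by simp
  ultimately have "(\<lambda>j. zigzag j mod int n) ` {..<n} = {0..<int n}"
    by (intro card_subset_eq) simp_all
  moreover have "k mod int n \<in> {0..<int n}" using assms by simp
  ultimately have "k mod int n \<in> (\<lambda>j. zigzag j mod int n) ` {..<n}" by simp
  then show thesis using that by auto
qed

section \<open>Reflection labellings\<close>

text \<open>
  The labelling h identifies \<int>/n with {1..n} so that P and Q become the reflections
  k \<mapsto> c - k and k \<mapsto> c - 1 - k; P \<circ> Q is then the rotation k \<mapsto> k + 1.
\<close>

definition reflection_labelling ::
    "nat \<Rightarrow> (nat \<Rightarrow> nat) \<Rightarrow> (nat \<Rightarrow> nat) \<Rightarrow> (int \<Rightarrow> nat) \<Rightarrow> int \<Rightarrow> bool" where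
  "reflection_labelling n P Q h c \<longleftrightarrow>
     (\<forall>a b. h a = h b \<longleftrightarrow> a mod int n = b mod int n) \<and> range h \<subseteq> {1..n} \<and>
     (\<forall>k. P (h k) = h (c - k)) \<and> (\<forall>k. Q (h k) = h (c - 1 - k))"

lemma reflection_labellingD:
  assumes "reflection_labelling n P Q h c"
  shows "h a = h b \<longleftrightarrow> a mod int n = b mod int n" and "h a \<in> {1..n}"
    and "P (h k) = h (c - k)" and "Q (h k) = h (c - 1 - k)"
  using assms unfolding reflection_labelling_def by blast+

lemma reflection_labelling_flip:
  assumes "reflection_labelling n P Q h c"
  shows "reflection_labelling n Q P (\<lambda>k. h (- k)) (1 - c)"
  unfolding reflection_labelling_def
proof (intro conjI allI)
  note lab = reflection_labellingD[OF assms]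
  fix a b k
  show "h (- a) = h (- b) \<longleftrightarrow> a mod int n = b mod int n"
    unfolding lab(1) by (metis mod_minus_cong minus_minus)
  show "range (\<lambda>k. h (- k)) \<subseteq> {1..n}" using lab(2) by blast
  have "- (1 - c - k) = c - 1 - - k" "- (1 - c - 1 - k) = c - - k" by simp_all
  then show "Q (h (- k)) = h (- (1 - c - k))" "P (h (- k)) = h (- (1 - c - 1 - k))"
    by (simp_all only: lab(3,4))
qed

lemma reflection_labelling_shift:
  assumes "reflection_labelling n P Q h c"
  shows "reflection_labelling n P Q (\<lambda>k. h (k + m)) (c - 2 * m)"
  unfolding reflection_labelling_def
proof (intro conjI allI)
  note lab = reflection_labellingD[OF assms]
  fix a b k
  show "h (a + m) = h (b + m) \<longleftrightarrow> a mod int n = b mod int n"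
    unfolding lab(1) by (simp add: mod_eq_dvd_iff)
  show "range (\<lambda>k. h (k + m)) \<subseteq> {1..n}" using lab(2) by blast
  have "c - 2 * m - k + m = c - (k + m)" "c - 2 * m - 1 - k + m = c - 1 - (k + m)" by simp_all
  then show "P (h (k + m)) = h (c - 2 * m - k + m)" "Q (h (k + m)) = h (c - 2 * m - 1 - k + m)"
    by (simp_all only: lab(3,4))
qed

lemma reflection_labelling_normalize:
  assumes "reflection_labelling n P Q h c"
  obtains h' where "reflection_labelling n P Q h' 1" | h' where "reflection_labelling n Q P h' 1"
proof (cases "even c")
  case True
  then obtain m where "c = 2 * m" by (rule evenE)
  then have "1 - c - 2 * - m = 1" by simp
  with reflection_labelling_shift[OF reflection_labelling_flip[OF assms], of "- m"]
  show thesis by (intro that(2)) simp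
next
  case False
  then obtain m where "c = 2 * m + 1" by (rule oddE)
  then have "c - 2 * m = 1" by simp
  with reflection_labelling_shift[OF assms, of m] show thesis by (intro that(1)) simp
qed

text \<open>
  If a path v_0, ..., v_(n-1) uses arcs of the sides True, False, True, ... in turn, then
  arc b exchanges v_j and v_(j+1) for exactly those j with even j = b.
\<close>

definition acts_by_adjacent_swaps :: "nat \<Rightarrow> (bool \<Rightarrow> nat \<Rightarrow> nat) \<Rightarrow> nat list \<Rightarrow> bool" where
  "acts_by_adjacent_swaps n arc vs \<longleftrightarrow> (\<forall>b. \<forall>i < n. arc b (vs ! i) = vs ! adjacent_swap n b i)"

lemma acts_by_adjacent_swaps_if_reflection_labelling:
  assumes "reflection_labelling n (arc True) (arc False) h 1"
  obtains vs where "distinct vs" "set vs = {1..n}" "acts_by_adjacent_swaps n arc vs"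
proof -
  note lab = reflection_labellingD[OF assms]
  have arc: "arc b (h k) = h (of_bool b - k)" for b k
    using lab(3,4) by (cases b) simp_all
  define vs where "vs = map (\<lambda>j. h (zigzag j)) [0..<n]"
  have "inj_on (\<lambda>j. h (zigzag j)) {..<n}"
    using zigzag_mod_inj by (auto simp: inj_on_def lab(1))
  then have "distinct vs" by (simp add: vs_def distinct_map atLeast0LessThan)
  moreover have "set vs = {1..n}"
  proof (rule card_subset_eq)
    show "set vs \<subseteq> {1..n}" using lab(2) unfolding vs_def by auto
    show "card (set vs) = card {1..n}" using distinct_card[OF \<open>distinct vs\<close>] by (simp add: vs_def)
  qed simp
  moreover have "acts_by_adjacent_swaps n arc vs"
    unfolding acts_by_adjacent_swaps_def
  proof (intro allI impI)
    fix b i assume "i < n"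
    then have "h (zigzag (adjacent_swap n b i)) = h (of_bool b - zigzag i)"
      unfolding lab(1) by (rule zigzag_adjacent_swap)
    moreover have "vs ! i = h (zigzag i)" "vs ! adjacent_swap n b i = h (zigzag (adjacent_swap n b i))"
      using \<open>i < n\<close> adjacent_swap_less[OF \<open>i < n\<close>] by (simp_all add: vs_def)
    ultimately show "arc b (vs ! i) = vs ! adjacent_swap n b i" by (simp add: arc)
  qed
  ultimately show thesis by (rule that)
qed

lemma reflection_labelling_if_acts_by_adjacent_swaps:
  assumes "0 < n" "distinct vs" "set vs = {1..n}" "acts_by_adjacent_swaps n arc vs"
  obtains h where "reflection_labelling n (arc True) (arc False) h 1"
proof -
  have "\<forall>k. \<exists>j. j < n \<and> zigzag j mod int n = k mod int n"
    using zigzag_mod_surj[OF assms(1)] by blast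
  then have "\<exists>idx. \<forall>k. idx k < n \<and> zigzag (idx k) mod int n = k mod int n"
    by (rule choice)
  then obtain idx where "\<forall>k. idx k < n \<and> zigzag (idx k) mod int n = k mod int n"
    by blast
  then have idx: "\<And>k. idx k < n" "\<And>k. zigzag (idx k) mod int n = k mod int n" by simp_all
  have idx_eq: "idx k = j" if "j < n" "zigzag j mod int n = k mod int n" for j k
    using idx(2)[of k] that(2) by (intro zigzag_mod_inj[OF idx(1) that(1)]) simp
  have len: "length vs = n" using distinct_card[OF assms(2)] assms(3) by simp
  define h where "h k = vs ! idx k" for k
  have "reflection_labelling n (arc True) (arc False) h 1"
    unfolding reflection_labelling_def
  proof (intro conjI allI)
    fix a b k
    have "h a = h b \<longleftrightarrow> idx a = idx b"
      unfolding h_def using nth_eq_iff_index_eq[OF assms(2)] len idx(1) by metis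
    also have "\<dots> \<longleftrightarrow> a mod int n = b mod int n"
      using idx(2) idx_eq[OF idx(1)] by metis
    finally show "h a = h b \<longleftrightarrow> a mod int n = b mod int n" .
    show "range h \<subseteq> {1..n}" using idx(1) len assms(3) by (auto simp: h_def)
    have arc: "arc b (h k) = h (of_bool b - k)" for b
    proof -
      have "zigzag (adjacent_swap n b (idx k)) mod int n = (of_bool b - zigzag (idx k)) mod int n"
        by (rule zigzag_adjacent_swap[OF idx(1)])
      also have "\<dots> = (of_bool b - k) mod int n"
        by (metis idx(2) mod_diff_right_eq)
      finally have "idx (of_bool b - k) = adjacent_swap n b (idx k)"
        by (rule idx_eq[OF adjacent_swap_less[OF idx(1)]])
      moreover have "arc b (vs ! idx k) = vs ! adjacent_swap n b (idx k)"
        using assms(4) idx(1) unfolding acts_by_adjacent_swaps_def by blast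
      ultimately show ?thesis unfolding h_def by simp
    qed
    show "arc True (h k) = h (1 - k)" "arc False (h k) = h (1 - 1 - k)"
      using arc[of True] arc[of False] by simp_all
  qed
  then show thesis by (rule that)
qed

lemma ex_reflection_labelling_iff_acts_by_adjacent_swaps:
  assumes "0 < n"
  shows "(\<exists>h L. reflection_labelling n (arc L) (arc (\<not> L)) h 1) \<longleftrightarrow>
    (\<exists>vs L. distinct vs \<and> set vs = {1..n} \<and> acts_by_adjacent_swaps n (\<lambda>b. arc (b = L)) vs)"
proof
  assume "\<exists>h L. reflection_labelling n (arc L) (arc (\<not> L)) h 1"
  then obtain h L where "reflection_labelling n (arc L) (arc (\<not> L)) h 1" by blast
  then have "reflection_labelling n ((\<lambda>b. arc (b = L)) True) ((\<lambda>b. arc (b = L)) False) h 1"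
    by simp
  then obtain vs where "distinct vs" "set vs = {1..n}" "acts_by_adjacent_swaps n (\<lambda>b. arc (b = L)) vs"
    by (rule acts_by_adjacent_swaps_if_reflection_labelling[where arc = "\<lambda>b. arc (b = L)"])
  then show "\<exists>vs L. distinct vs \<and> set vs = {1..n} \<and> acts_by_adjacent_swaps n (\<lambda>b. arc (b = L)) vs"
    by blast
next
  assume "\<exists>vs L. distinct vs \<and> set vs = {1..n} \<and> acts_by_adjacent_swaps n (\<lambda>b. arc (b = L)) vs"
  then obtain vs L where vs: "distinct vs" "set vs = {1..n}"
    "acts_by_adjacent_swaps n (\<lambda>b. arc (b = L)) vs" by blast
  obtain h where "reflection_labelling n ((\<lambda>b. arc (b = L)) True) ((\<lambda>b. arc (b = L)) False) h 1"
    by (rule reflection_labelling_if_acts_by_adjacent_swaps[where arc = "\<lambda>b. arc (b = L)", OF assms vs])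
  then have "reflection_labelling n (arc L) (arc (\<not> L)) h 1" by simp
  then show "\<exists>h L. reflection_labelling n (arc L) (arc (\<not> L)) h 1" by blast
qed

lemma cycle_of_list_nth:
  assumes "distinct cs" "k < length cs"
  shows "cycle_of_list cs (cs ! k) = cs ! (Suc k mod length cs)"
proof -
  have "map (cycle_of_list cs) cs = rotate1 cs" using cyclic_rotation[OF assms(1), of 1] by simp
  then show ?thesis using assms(2) by (metis nth_map nth_rotate1)
qed

lemma cycle_of_list_mod_labelling:
  assumes "distinct cs" "cs \<noteq> []"
  defines "h \<equiv> \<lambda>k. cs ! nat (k mod int (length cs))"
  shows "h a = h b \<longleftrightarrow> a mod int (length cs) = b mod int (length cs)"
    and "range h = set cs"
    and "cycle_of_list cs (h k) = h (k + 1)"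
proof -
  let ?n = "length cs"
  have pos: "0 < ?n" using assms(2) by simp
  have less: "nat (k mod int ?n) < ?n" for k using pos by (simp add: nat_less_iff)
  have "h a = h b \<longleftrightarrow> nat (a mod int ?n) = nat (b mod int ?n)"
    unfolding h_def using less by (simp add: nth_eq_iff_index_eq[OF assms(1)])
  also have "\<dots> \<longleftrightarrow> a mod int ?n = b mod int ?n" using pos by (simp add: eq_nat_nat_iff)
  finally show "h a = h b \<longleftrightarrow> a mod int ?n = b mod int ?n" .
  show "range h = set cs"
  proof (intro equalityI subsetI)
    fix x assume "x \<in> range h"
    then show "x \<in> set cs" unfolding h_def using less by auto
  next
    fix x assume "x \<in> set cs"
    then obtain j where "j < ?n" "x = cs ! j" by (auto simp: in_set_conv_nth)
    then have "x = h (int j)" by (simp add: h_def zmod_int)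
    then show "x \<in> range h" by simp
  qed
  have "int (Suc (nat (k mod int ?n)) mod ?n) = (1 + k mod int ?n) mod int ?n"
    using pos by (simp add: of_nat_mod)
  also have "\<dots> = (k + 1) mod int ?n" by (simp add: mod_add_right_eq add.commute)
  finally have "Suc (nat (k mod int ?n)) mod ?n = nat ((k + 1) mod int ?n)" by simp
  then show "cycle_of_list cs (h k) = h (k + 1)"
    unfolding h_def using cycle_of_list_nth[OF assms(1) less] by simp
qed

section \<open>Two involutions of {1..n}\<close>

locale arc_involutions =
  fixes n :: nat and arc :: "bool \<Rightarrow> nat \<Rightarrow> nat"
  assumes arc_arc [simp]: "arc b (arc b x) = x"
    and arc_fixed: "x \<notin> {1..n} \<Longrightarrow> arc b x = x"
begin

lemma arc_in: "x \<in> {1..n} \<Longrightarrow> arc b x \<in> {1..n}"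
  by (metis arc_arc arc_fixed)

lemma finite_involution_edges: "finite (involution_edges arc)"
proof -
  have "involution_edges arc \<subseteq> (\<lambda>(b, x). (b, {x, arc b x})) ` (UNIV \<times> {1..n})"
    unfolding involution_edges_def using arc_fixed by fastforce
  then show ?thesis by (rule finite_subset) simp
qed

lemma involution_edges_if_acts_by_adjacent_swaps:
  assumes "distinct vs" "set vs = {1..n}" "acts_by_adjacent_swaps n (\<lambda>b. arc (b = L)) vs"
  shows "involution_edges arc = (\<lambda>j. (L = even j, {vs ! j, vs ! Suc j})) ` {..<n - 1}"
proof -
  have len: "length vs = n" using distinct_card[OF assms(1)] assms(2) by simp
  have act: "arc l (vs ! i) = vs ! adjacent_swap n (l = L) i" if "i < n" for l i
  proof -
    have "arc ((l = L) = L) (vs ! i) = vs ! adjacent_swap n (l = L) i"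
      using assms(3) that unfolding acts_by_adjacent_swaps_def by blast
    then show ?thesis by (cases L) simp_all
  qed
  show ?thesis
  proof (intro equalityI subsetI)
    fix e assume "e \<in> involution_edges arc"
    then obtain l x where e: "e = (l, {x, arc l x})" "arc l x \<noteq> x"
      unfolding involution_edges_def by blast
    then have "x \<in> set vs" using arc_fixed assms(2) by blast
    then obtain i where i: "i < n" "x = vs ! i" using len by (auto simp: in_set_conv_nth)
    have "adjacent_swap n (l = L) i \<noteq> i" using e(2) act[OF i(1)] i(2) by auto
    with i(1) obtain j where j: "j + 1 < n" "(l = L) = even j"
      "{i, adjacent_swap n (l = L) i} = {j, Suc j}"
      by (rule adjacent_swap_moved)
    have "e = (L = even j, {vs ! j, vs ! Suc j})"
      using e(1) i act[OF i(1)] j(2,3) by (auto simp: doubleton_eq_iff)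
    then show "e \<in> (\<lambda>j. (L = even j, {vs ! j, vs ! Suc j})) ` {..<n - 1}" using j(1) by auto
  next
    fix e assume "e \<in> (\<lambda>j. (L = even j, {vs ! j, vs ! Suc j})) ` {..<n - 1}"
    then obtain j where "j < n - 1" "e = (L = even j, {vs ! j, vs ! Suc j})" by blast
    then have j: "j + 1 < n" "e = (L = even j, {vs ! j, vs ! Suc j})" by simp_all
    have "arc (L = even j) (vs ! j) = vs ! Suc j"
      using act[of j] adjacent_swap_Suc[OF j(1)] j(1) by (cases L) simp_all
    moreover have "vs ! Suc j \<noteq> vs ! j" using assms(1) len j(1) by (simp add: nth_eq_iff_index_eq)
    ultimately show "e \<in> involution_edges arc" unfolding involution_edges_def j(2) by force
  qed
qed

lemma involution_edges_swap:
  assumes "involution_edges arc = (\<lambda>j. (lt j, {vs ! j, vs ! Suc j})) ` {..<n - 1}" "j + 1 < n"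
  shows "arc (lt j) (vs ! j) = vs ! Suc j" and "arc (lt j) (vs ! Suc j) = vs ! j"
proof -
  have "(lt j, {vs ! j, vs ! Suc j}) \<in> involution_edges arc" using assms by auto
  then obtain y where "{vs ! j, vs ! Suc j} = {y, arc (lt j) y}"
    unfolding involution_edges_def by auto
  then show "arc (lt j) (vs ! j) = vs ! Suc j" "arc (lt j) (vs ! Suc j) = vs ! j"
    by (auto simp: doubleton_eq_iff)
qed

lemma involution_edges_sides_alternate:
  assumes "distinct vs" "set vs = {1..n}"
    and edges: "involution_edges arc = (\<lambda>j. (lt j, {vs ! j, vs ! Suc j})) ` {..<n - 1}"
    and "j + 1 < n"
  shows "lt j = (lt 0 = even j)"
  using assms(4)
proof (induction j)
  case (Suc j)
  have "lt (Suc j) \<noteq> lt j"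
  proof
    assume "lt (Suc j) = lt j"
    then have "vs ! j = vs ! Suc (Suc j)"
      using involution_edges_swap[OF edges, of j] involution_edges_swap[OF edges, of "Suc j"] Suc.prems
      by simp
    moreover have "length vs = n" using distinct_card[OF assms(1)] assms(2) by simp
    ultimately show False using assms(1) Suc.prems by (simp add: nth_eq_iff_index_eq)
  qed
  with Suc show ?case by auto
qed simp

lemma acts_by_adjacent_swaps_if_involution_edges:
  assumes "distinct vs" "set vs = {1..n}"
    and edges: "involution_edges arc = (\<lambda>j. (lt j, {vs ! j, vs ! Suc j})) ` {..<n - 1}"
  shows "acts_by_adjacent_swaps n (\<lambda>b. arc (b = lt 0)) vs"
  unfolding acts_by_adjacent_swaps_def
proof (intro allI impI)
  note swap = involution_edges_swap[OF edges]
  note alternate = involution_edges_sides_alternate[OF assms]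
  have len: "length vs = n" using distinct_card[OF assms(1)] assms(2) by simp
  fix b i assume i: "i < n"
  show "arc (b = lt 0) (vs ! i) = vs ! adjacent_swap n b i"
  proof (cases "adjacent_swap n b i = i")
    case False
    with i obtain j where j: "j + 1 < n" "b = even j" "{i, adjacent_swap n b i} = {j, Suc j}"
      by (rule adjacent_swap_moved)
    then have "lt j = (b = lt 0)" using alternate[OF j(1)] by (cases "lt 0") auto
    then show ?thesis using swap[OF j(1)] j(3) by (auto simp: doubleton_eq_iff)
  next
    case True
    show ?thesis
    proof (rule ccontr)
      assume "arc (b = lt 0) (vs ! i) \<noteq> vs ! adjacent_swap n b i"
      with True have "(b = lt 0, {vs ! i, arc (b = lt 0) (vs ! i)}) \<in> involution_edges arc"
        unfolding involution_edges_def by auto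
      then obtain j where j: "j < n - 1" "lt j = (b = lt 0)"
        "{vs ! i, arc (b = lt 0) (vs ! i)} = {vs ! j, vs ! Suc j}"
        unfolding edges by auto
      then have "i = j \<or> i = Suc j"
        using assms(1) len i by (auto simp: doubleton_eq_iff nth_eq_iff_index_eq)
      moreover have "b = even j" using j(1,2) alternate[of j] by (cases "lt 0") auto
      then have "adjacent_swap n b j = Suc j" using adjacent_swap_Suc j(1) by simp
      ultimately show False using True j(1) adjacent_swap_adjacent_swap[of j n b] by auto
    qed
  qed
qed

text \<open>L is the side of the first edge of the path.\<close>

lemma hamiltonian_path_iff_acts_by_adjacent_swaps:
  "hamiltonian_path n (involution_edges arc) \<longleftrightarrow>
    (\<exists>vs L. distinct vs \<and> set vs = {1..n} \<and> acts_by_adjacent_swaps n (\<lambda>b. arc (b = L)) vs)"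
  unfolding hamiltonian_path_iff[OF finite_involution_edges]
proof
  assume "\<exists>vs lt. distinct vs \<and> set vs = {1..n} \<and>
    involution_edges arc = (\<lambda>i. (lt i, {vs ! i, vs ! Suc i})) ` {..<n - 1}"
  then obtain vs lt where "distinct vs" "set vs = {1..n}"
    and "involution_edges arc = (\<lambda>i. (lt i, {vs ! i, vs ! Suc i})) ` {..<n - 1}" by blast
  then have "acts_by_adjacent_swaps n (\<lambda>b. arc (b = lt 0)) vs"
    by (rule acts_by_adjacent_swaps_if_involution_edges)
  with \<open>distinct vs\<close> \<open>set vs = {1..n}\<close>
  show "\<exists>vs L. distinct vs \<and> set vs = {1..n} \<and> acts_by_adjacent_swaps n (\<lambda>b. arc (b = L)) vs"
    by blast
next
  assume "\<exists>vs L. distinct vs \<and> set vs = {1..n} \<and> acts_by_adjacent_swaps n (\<lambda>b. arc (b = L)) vs"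
  then obtain vs L where "distinct vs" "set vs = {1..n}" "acts_by_adjacent_swaps n (\<lambda>b. arc (b = L)) vs"
    by blast
  then have "involution_edges arc = (\<lambda>j. (L = even j, {vs ! j, vs ! Suc j})) ` {..<n - 1}"
    by (rule involution_edges_if_acts_by_adjacent_swaps)
  then have "\<exists>lt. involution_edges arc = (\<lambda>i. (lt i, {vs ! i, vs ! Suc i})) ` {..<n - 1}"
    by (rule exI[where x = "\<lambda>j. L = even j"])
  with \<open>distinct vs\<close> \<open>set vs = {1..n}\<close>
  show "\<exists>vs lt. distinct vs \<and> set vs = {1..n} \<and>
    involution_edges arc = (\<lambda>i. (lt i, {vs ! i, vs ! Suc i})) ` {..<n - 1}"
    by blast
qed

lemma n_cycle_if_reflection_labelling:
  assumes "reflection_labelling n (arc True) (arc False) h c"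
  shows "is_n_cycle n (arc True \<circ> arc False)"
proof -
  note lab = reflection_labellingD[OF assms]
  have rotation: "arc True (arc False (h k)) = h (k + 1)" for k
    using lab(3)[of "c - 1 - k"] by (simp add: lab(4) add.commute)
  define cs where "cs = map (\<lambda>j. h (int j)) [0..<n]"
  have "inj_on (\<lambda>j. h (int j)) {..<n}"
    by (auto simp: inj_on_def lab(1) zmod_int)
  then have "distinct cs" by (simp add: cs_def distinct_map atLeast0LessThan)
  have "set cs = {1..n}"
  proof (rule card_subset_eq)
    show "set cs \<subseteq> {1..n}" using lab(2) unfolding cs_def by auto
    show "card (set cs) = card {1..n}" using distinct_card[OF \<open>distinct cs\<close>] by (simp add: cs_def)
  qed simp
  have "arc True \<circ> arc False = cycle_of_list cs"
  proof
    fix x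
    show "(arc True \<circ> arc False) x = cycle_of_list cs x"
    proof (cases "x \<in> set cs")
      case True
      then obtain j where j: "j < n" "x = h (int j)" by (auto simp: cs_def)
      have "cycle_of_list cs x = cs ! (Suc j mod n)"
        using cycle_of_list_nth[OF \<open>distinct cs\<close>, of j] j by (simp add: cs_def)
      also have "\<dots> = h (int j + 1)"
        using j(1) by (simp add: cs_def lab(1) zmod_int add.commute)
      finally show ?thesis using j(2) rotation by simp
    next
      case False
      then have "x \<notin> {1..n}" using \<open>set cs = {1..n}\<close> by simp
      then show ?thesis using id_outside_supp[OF False] by (simp add: arc_fixed)
    qed
  qed
  then show ?thesis using \<open>distinct cs\<close> \<open>set cs = {1..n}\<close> unfolding is_n_cycle_def by blast
qed

lemma reflection_labelling_if_n_cycle: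
  assumes "0 < n" "is_n_cycle n (arc True \<circ> arc False)"
  obtains h c where "reflection_labelling n (arc True) (arc False) h c"
proof -
  obtain cs where cs: "distinct cs" "set cs = {1..n}"
    and cycle: "arc True \<circ> arc False = cycle_of_list cs"
    using assms(2) unfolding is_n_cycle_def by blast
  have len: "length cs = n" using distinct_card[OF cs(1)] cs(2) by simp
  then have "cs \<noteq> []" using assms(1) by auto
  define h where "h k = cs ! nat (k mod int n)" for k
  note h_cycle = cycle_of_list_mod_labelling[OF cs(1) \<open>cs \<noteq> []\<close>, unfolded len, folded h_def]
  have rotation: "arc True (arc False (h k)) = h (k + 1)" for k
    using h_cycle(3) unfolding cycle[symmetric] by simp
  obtain c where c: "arc True (h 0) = h c"
    using arc_in[of "h 0" True] h_cycle(2) cs(2) by (metis rangeE rangeI)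
  have top: "arc True (h k) = h (c - k)" for k
  proof (induction k rule: int_induct[where k = 0])
    case base
    then show ?case using c by simp
  next
    case (step1 k)
    have "arc True (arc False (h (c - 1 - k))) = h (c - k)"
      using rotation[of "c - 1 - k"] by (simp add: algebra_simps)
    also have "\<dots> = arc True (h k)" using step1.IH by simp
    finally have "h (c - 1 - k) = arc False (h k)" by (metis arc_arc)
    moreover have "arc True (h (k + 1)) = arc False (h k)"
      using rotation[of k] by (metis arc_arc)
    ultimately show ?case by (simp add: algebra_simps)
  next
    case (step2 k)
    have "arc False (h (k - 1)) = arc True (h k)"
      using rotation[of "k - 1"] by (metis arc_arc diff_add_cancel)
    then have "h (k - 1) = arc False (h (c - k))" using step2.IH by (metis arc_arc)
    then show ?case using rotation[of "c - k"] by (simp add: algebra_simps)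
  qed
  have bottom: "arc False (h k) = h (c - 1 - k)" for k
  proof -
    have "arc True (arc False (h (c - 1 - k))) = arc True (h k)"
      using rotation[of "c - 1 - k"] top[of k] by simp
    then show ?thesis by (metis arc_arc)
  qed
  have "reflection_labelling n (arc True) (arc False) h c"
    unfolding reflection_labelling_def using h_cycle(1,2) cs(2) top bottom by blast
  then show thesis by (rule that)
qed

lemma n_cycle_iff_ex_reflection_labelling:
  assumes "0 < n"
  shows "is_n_cycle n (arc True \<circ> arc False) \<longleftrightarrow>
    (\<exists>h L. reflection_labelling n (arc L) (arc (\<not> L)) h 1)"
proof
  assume "is_n_cycle n (arc True \<circ> arc False)"
  then obtain h c where "reflection_labelling n (arc True) (arc False) h c"
    using reflection_labelling_if_n_cycle[OF assms] by blast
  then show "\<exists>h L. reflection_labelling n (arc L) (arc (\<not> L)) h 1"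
  proof (rule reflection_labelling_normalize)
    fix h' assume "reflection_labelling n (arc True) (arc False) h' 1"
    then show ?thesis by (intro exI[of _ h'] exI[of _ True]) simp
  next
    fix h' assume "reflection_labelling n (arc False) (arc True) h' 1"
    then show ?thesis by (intro exI[of _ h'] exI[of _ False]) simp
  qed
next
  assume "\<exists>h L. reflection_labelling n (arc L) (arc (\<not> L)) h 1"
  then obtain h L where lab: "reflection_labelling n (arc L) (arc (\<not> L)) h 1" by blast
  show "is_n_cycle n (arc True \<circ> arc False)"
  proof (cases L)
    case True
    with lab show ?thesis by (simp add: n_cycle_if_reflection_labelling)
  next
    case False
    with reflection_labelling_flip[OF lab] show ?thesis by (simp add: n_cycle_if_reflection_labelling)
  qed
qed

theorem hamiltonian_path_iff_n_cycle:
  assumes "0 < n"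
  shows "hamiltonian_path n (involution_edges arc) \<longleftrightarrow> is_n_cycle n (arc True \<circ> arc False)"
  unfolding hamiltonian_path_iff_acts_by_adjacent_swaps n_cycle_iff_ex_reflection_labelling[OF assms]
    ex_reflection_labelling_iff_acts_by_adjacent_swaps[OF assms] ..

end

theorem theorem4p5:
  fixes n :: nat and xs ys :: "nat list"
  assumes "n \<ge> 1" and "is_composition n xs" and "is_composition n ys"
  shows "meander_is_path n xs ys \<longleftrightarrow> is_n_cycle n (meander_perm xs ys)"
proof -
  have sums: "sum_list xs = n" "sum_list ys = n"
    using assms(2,3) by (simp_all add: is_composition_def)
  interpret arc_involutions n "\<lambda>b. if b then arc_bij xs else arc_bij ys"
    by unfold_locales (use arc_bij_fixed sums in auto)
  have "meander_is_path n xs ys \<longleftrightarrow> hamiltonian_path n (meander_edges xs ys)"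
    unfolding meander_is_path_def hamiltonian_path_def ..
  also have "\<dots> \<longleftrightarrow> is_n_cycle n (arc_bij xs \<circ> arc_bij ys)"
    unfolding meander_edges_eq_involution_edges using hamiltonian_path_iff_n_cycle assms(1) by simp
  finally show ?thesis by (simp add: meander_perm_def)
qed

end
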